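(* Let $A,B\subseteq[n]$ satisfy $A\subseteq B$, or $B\subseteq A$, or $A\cap B=\emptyset$. Then $[\Gamma_A,\Gamma_B]=0$.
   Context: Fix $n\ge1$ and real parameters $\mu_1,\dots,\mu_n>0$; write $[n]=\{1,\dots,n\}$. For $i\in[n]$, $r_i$ is the reflection $(r_if)(x)=f(x_1,\dots,-x_i,\dots,x_n)$ and $T_i=\partial_{x_i}+\frac{\mu_i}{x_i}(1-r_i)$. $\mathcal{C}\ell_n$ is generated by $e_1,\dots,e_n$ with $e_ie_j+e_je_i=-2\delta_{ij}$, $V$ is a fixed left $\mathcal{C}\ell_n$-module, and operators act on $\mathcal{P}(\mathbb{R}^n)\otimes V$ with $x_i,T_i,r_i$ acting on the polynomial factor and $e_i$ on $V$. For $A\subseteq[n]$: $\underline{D}_A=\sum_{i\in A}e_iT_i$, $\underline{x}_A=\sum_{i\in A}e_ix_i$, $\underline{S}_A=\frac12([\underline{x}_A,\underline{D}_A]-1)$, $\Gamma_A=\underline{S}_A\prod_{i\in A}r_i$ (empty sums $0$, empty products $1$). *)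

theory Defs
  imports Main "HOL.Real_Vector_Spaces"
begin

text \<open>Elements of P(R^n) tensor V are represented by their coefficient functions:
  p :: (nat => nat) => 'v, where p alpha is the V-coefficient of the monomial
  x^alpha = prod_j x_j^(alpha j).\<close>

type_synonym 'v pv = "(nat \<Rightarrow> nat) \<Rightarrow> 'v"

definition is_poly :: "nat \<Rightarrow> 'v::real_vector pv \<Rightarrow> bool" where
  "is_poly n p \<longleftrightarrow> finite {\<alpha>. p \<alpha> \<noteq> 0} \<and>
     (\<forall>\<alpha>. p \<alpha> \<noteq> 0 \<longrightarrow> (\<forall>j. j \<notin> {1..n} \<longrightarrow> \<alpha> j = 0))"

definition clifford_module :: "nat \<Rightarrow> (nat \<Rightarrow> 'v::real_vector \<Rightarrow> 'v) \<Rightarrow> bool" where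
  "clifford_module n e \<longleftrightarrow> (\<forall>i\<in>{1..n}. linear (e i)) \<and>
     (\<forall>i\<in>{1..n}. \<forall>j\<in>{1..n}. \<forall>v. e i (e j v) + e j (e i v) = (if i = j then -2 else 0) *\<^sub>R v)"

definition mulx :: "nat \<Rightarrow> 'v::real_vector pv \<Rightarrow> 'v pv" where
  "mulx i p = (\<lambda>\<alpha>. if \<alpha> i = 0 then 0 else p (\<alpha>(i := \<alpha> i - 1)))"

text \<open>division by x_i (exact on multiples of x_i; inverse of mulx there)\<close>
definition divx :: "nat \<Rightarrow> 'v::real_vector pv \<Rightarrow> 'v pv" where
  "divx i p = (\<lambda>\<alpha>. p (\<alpha>(i := Suc (\<alpha> i))))"

text \<open>reflection r_i: (r_i f)(x) = f(x_1,..,-x_i,..,x_n)\<close>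
definition rfl :: "nat \<Rightarrow> 'v::real_vector pv \<Rightarrow> 'v pv" where
  "rfl i p = (\<lambda>\<alpha>. ((-1::real) ^ \<alpha> i) *\<^sub>R p \<alpha>)"

definition dx :: "nat \<Rightarrow> 'v::real_vector pv \<Rightarrow> 'v pv" where
  "dx i p = (\<lambda>\<alpha>. real (Suc (\<alpha> i)) *\<^sub>R p (\<alpha>(i := Suc (\<alpha> i))))"

definition dunkl :: "(nat \<Rightarrow> real) \<Rightarrow> nat \<Rightarrow> 'v::real_vector pv \<Rightarrow> 'v pv" where
  "dunkl \<mu> i p = (\<lambda>\<alpha>. dx i p \<alpha> + \<mu> i *\<^sub>R divx i (\<lambda>\<beta>. p \<beta> - rfl i p \<beta>) \<alpha>)"

definition cliff :: "(nat \<Rightarrow> 'v::real_vector \<Rightarrow> 'v) \<Rightarrow> nat \<Rightarrow> 'v pv \<Rightarrow> 'v pv" where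
  "cliff e i p = (\<lambda>\<alpha>. e i (p \<alpha>))"

definition diracA :: "(nat \<Rightarrow> 'v::real_vector \<Rightarrow> 'v) \<Rightarrow> (nat \<Rightarrow> real) \<Rightarrow> nat set \<Rightarrow> 'v pv \<Rightarrow> 'v pv" where
  "diracA e \<mu> A p = (\<lambda>\<alpha>. \<Sum>i\<in>A. cliff e i (dunkl \<mu> i p) \<alpha>)"

definition vecxA :: "(nat \<Rightarrow> 'v::real_vector \<Rightarrow> 'v) \<Rightarrow> nat set \<Rightarrow> 'v pv \<Rightarrow> 'v pv" where
  "vecxA e A p = (\<lambda>\<alpha>. \<Sum>i\<in>A. cliff e i (mulx i p) \<alpha>)"

definition SA :: "(nat \<Rightarrow> 'v::real_vector \<Rightarrow> 'v) \<Rightarrow> (nat \<Rightarrow> real) \<Rightarrow> nat set \<Rightarrow> 'v pv \<Rightarrow> 'v pv" where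
  "SA e \<mu> A p = (\<lambda>\<alpha>. (1/2::real) *\<^sub>R
      (vecxA e A (diracA e \<mu> A p) \<alpha> - diracA e \<mu> A (vecxA e A p) \<alpha> - p \<alpha>))"

definition rflA :: "nat set \<Rightarrow> 'v::real_vector pv \<Rightarrow> 'v pv" where
  "rflA A p = foldr rfl (sorted_list_of_set A) p"

definition GammaA :: "(nat \<Rightarrow> 'v::real_vector \<Rightarrow> 'v) \<Rightarrow> (nat \<Rightarrow> real) \<Rightarrow> nat set \<Rightarrow> 'v pv \<Rightarrow> 'v pv" where
  "GammaA e \<mu> A p = SA e \<mu> A (rflA A p)"

end

theory Submission
  imports Defs
begin

text \<open>
  Write \<open>\<Gamma>\<^sub>A = S\<^sub>A r\<^sub>A\<close>. The reflection \<open>r\<^sub>A\<close> anticommutes with \<open>x\<^sub>A\<close> and \<open>D\<^sub>A\<close>, and so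
  does \<open>S\<^sub>A\<close>: this follows from the \<open>osp(1|2)\<close> relations \<open>x\<^sub>A\<^sup>2 = -\<Sum>x\<^sub>i\<^sup>2\<close>,
  \<open>D\<^sub>A\<^sup>2 = -\<Sum>T\<^sub>i\<^sup>2\<close>, \<open>[D\<^sub>A, \<Sum>x\<^sub>i\<^sup>2] = 2x\<^sub>A\<close>, \<open>[x\<^sub>A, \<Sum>T\<^sub>i\<^sup>2] = -2D\<^sub>A\<close>, which in turn
  come from the Clifford relations and the one-variable identities \<open>[T\<^sub>i, x\<^sub>i\<^sup>2] = 2x\<^sub>i\<close>,
  \<open>[x\<^sub>i, T\<^sub>i\<^sup>2] = -2T\<^sub>i\<close>. Hence \<open>\<Gamma>\<^sub>A\<close> commutes with \<open>x\<^sub>A\<close> and \<open>D\<^sub>A\<close>. For \<open>j \<notin> A\<close> the terms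
  \<open>e\<^sub>jx\<^sub>j\<close>, \<open>e\<^sub>jT\<^sub>j\<close> anticommute with \<open>x\<^sub>A\<close>, \<open>D\<^sub>A\<close> and commute with \<open>r\<^sub>A\<close>, so they commute
  with \<open>\<Gamma>\<^sub>A\<close> as well. If \<open>A \<subseteq> B\<close> or \<open>A \<inter> B = {}\<close>, then \<open>x\<^sub>B\<close> and \<open>D\<^sub>B\<close> are sums of such
  terms and possibly \<open>x\<^sub>A\<close>, \<open>D\<^sub>A\<close>, so \<open>\<Gamma>\<^sub>A\<close> commutes with \<open>S\<^sub>B\<close>; and \<open>r\<^sub>B\<close> multiplies both
  \<open>x\<^sub>A\<close> and \<open>D\<^sub>A\<close> by the same sign, so it commutes with \<open>S\<^sub>A\<close>, hence with \<open>\<Gamma>\<^sub>A\<close>.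
  Therefore \<open>\<Gamma>\<^sub>A\<close> commutes with \<open>\<Gamma>\<^sub>B = S\<^sub>B r\<^sub>B\<close>.
\<close>

section \<open>Linear operators on coefficient functions\<close>

definition pv_linear :: "('v::real_vector pv \<Rightarrow> 'v pv) \<Rightarrow> bool" where
  "pv_linear F \<longleftrightarrow> (\<forall>p q. F (\<lambda>\<alpha>. p \<alpha> + q \<alpha>) = (\<lambda>\<alpha>. F p \<alpha> + F q \<alpha>)) \<and>
     (\<forall>c p. F (\<lambda>\<alpha>. c *\<^sub>R p \<alpha>) = (\<lambda>\<alpha>. c *\<^sub>R F p \<alpha>))"

text \<open>Operators such as \<open>x\<^sub>i\<close>, \<open>T\<^sub>i\<close>, \<open>r\<^sub>i\<close> that act on the polynomial factor only.\<close>

definition coefficientwise :: "('v::real_vector pv \<Rightarrow> 'v pv) \<Rightarrow> bool" where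
  "coefficientwise F \<longleftrightarrow> (\<forall>f p. linear f \<longrightarrow> F (\<lambda>\<alpha>. f (p \<alpha>)) = (\<lambda>\<alpha>. f (F p \<alpha>)))"

definition commute_sign :: "real \<Rightarrow> ('v::real_vector pv \<Rightarrow> 'v pv) \<Rightarrow> ('v pv \<Rightarrow> 'v pv) \<Rightarrow> bool" where
  "commute_sign s F G \<longleftrightarrow> (\<forall>p. F (G p) = (\<lambda>\<alpha>. s *\<^sub>R G (F p) \<alpha>))"

definition sum_op :: "'i set \<Rightarrow> ('i \<Rightarrow> 'v::real_vector pv \<Rightarrow> 'v pv) \<Rightarrow> 'v pv \<Rightarrow> 'v pv" where
  "sum_op A G p = (\<lambda>\<alpha>. \<Sum>i\<in>A. G i p \<alpha>)"

definition S_op :: "('v::real_vector pv \<Rightarrow> 'v pv) \<Rightarrow> ('v pv \<Rightarrow> 'v pv) \<Rightarrow> 'v pv \<Rightarrow> 'v pv" where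
  "S_op X D p = (\<lambda>\<alpha>. (1/2::real) *\<^sub>R (X (D p) \<alpha> - D (X p) \<alpha> - p \<alpha>))"

lemma pv_linear_add: "pv_linear F \<Longrightarrow> F (\<lambda>\<alpha>. p \<alpha> + q \<alpha>) = (\<lambda>\<alpha>. F p \<alpha> + F q \<alpha>)"
  by (simp add: pv_linear_def)

lemma pv_linear_scaleR: "pv_linear F \<Longrightarrow> F (\<lambda>\<alpha>. c *\<^sub>R p \<alpha>) = (\<lambda>\<alpha>. c *\<^sub>R F p \<alpha>)"
  by (simp add: pv_linear_def)

lemma pv_linear_minus: "pv_linear F \<Longrightarrow> F (\<lambda>\<alpha>. - p \<alpha>) = (\<lambda>\<alpha>. - F p \<alpha>)"
  using pv_linear_scaleR[of F "-1" p] by simp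

lemma pv_linear_diff: "pv_linear F \<Longrightarrow> F (\<lambda>\<alpha>. p \<alpha> - q \<alpha>) = (\<lambda>\<alpha>. F p \<alpha> - F q \<alpha>)"
  using pv_linear_add[of F p "\<lambda>\<alpha>. - q \<alpha>"] pv_linear_minus[of F q] by simp

lemma pv_linear_zero: "pv_linear F \<Longrightarrow> F (\<lambda>\<alpha>. 0) = (\<lambda>\<alpha>. 0)"
  using pv_linear_scaleR[of F 0 "\<lambda>\<alpha>. 0"] by simp

lemma pv_linear_sum:
  assumes "pv_linear F"
  shows "F (\<lambda>\<alpha>. \<Sum>k\<in>K. f k \<alpha>) = (\<lambda>\<alpha>. \<Sum>k\<in>K. F (f k) \<alpha>)"
proof (induction K rule: infinite_finite_induct)
  case (insert x K)
  then show ?case using pv_linear_add[OF assms, of "f x" "\<lambda>\<alpha>. \<Sum>k\<in>K. f k \<alpha>"] by simp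
qed (simp_all add: pv_linear_zero[OF assms])

lemmas pv_linear_simps = pv_linear_add pv_linear_scaleR pv_linear_minus pv_linear_diff pv_linear_sum

lemma pv_linear_comp: "pv_linear F \<Longrightarrow> pv_linear G \<Longrightarrow> pv_linear (\<lambda>p. F (G p))"
  by (simp add: pv_linear_def)

lemma pv_linear_sum_op: "(\<And>i. i \<in> A \<Longrightarrow> pv_linear (G i)) \<Longrightarrow> pv_linear (sum_op A G)"
  by (simp add: pv_linear_def sum_op_def sum.distrib scaleR_sum_right)

lemma pv_linear_S_op:
  assumes "pv_linear X" "pv_linear D"
  shows "pv_linear (S_op X D)"
  unfolding pv_linear_def S_op_def
  by (simp add: pv_linear_simps[OF assms(1)] pv_linear_simps[OF assms(2)] algebra_simps)

lemma coefficientwise_comp: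
  "coefficientwise F \<Longrightarrow> coefficientwise G \<Longrightarrow> coefficientwise (\<lambda>p. F (G p))"
  by (simp add: coefficientwise_def)

lemma coefficientwise_sum_op:
  "(\<And>i. i \<in> A \<Longrightarrow> coefficientwise (G i)) \<Longrightarrow> coefficientwise (sum_op A G)"
  by (simp add: coefficientwise_def sum_op_def linear_sum)

lemma commute_sign_sum_op:
  assumes "pv_linear F" "\<And>i. i \<in> A \<Longrightarrow> commute_sign s F (G i)"
  shows "commute_sign s F (sum_op A G)"
  using assms(2)
  by (simp add: commute_sign_def sum_op_def pv_linear_sum[OF assms(1)] scaleR_sum_right)

lemma commute_sign_comp:
  assumes "pv_linear G" "commute_sign s F G" "commute_sign t F H"
  shows "commute_sign (s * t) F (\<lambda>p. G (H p))"
  using assms(2,3) by (simp add: commute_sign_def pv_linear_scaleR[OF assms(1)])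

lemma commute_sign_comp_left:
  assumes "pv_linear G" "commute_sign s G X" "commute_sign t H X"
  shows "commute_sign (s * t) (\<lambda>p. G (H p)) X"
  using assms(2,3) by (simp add: commute_sign_def pv_linear_scaleR[OF assms(1)] mult.commute)

lemma commute_sign_one_sym: "commute_sign 1 F G \<Longrightarrow> commute_sign 1 G F"
  by (simp add: commute_sign_def)

lemma commute_sign_sum_op_extend:
  assumes "pv_linear F" "finite B" "A \<subseteq> B \<or> A \<inter> B = {}" "commute_sign s F (sum_op A G)"
    and "\<And>i. i \<in> B - A \<Longrightarrow> commute_sign s F (G i)"
  shows "commute_sign s F (sum_op B G)"
  using assms(3)
proof
  assume "A \<subseteq> B"
  then have "sum_op B G = (\<lambda>p \<alpha>. sum_op A G p \<alpha> + sum_op (B - A) G p \<alpha>)"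
    using assms(2) by (simp add: fun_eq_iff sum_op_def sum.subset_diff[of A B])
  moreover have "commute_sign s F (sum_op (B - A) G)"
    by (rule commute_sign_sum_op[OF assms(1,5)])
  ultimately show ?thesis
    using assms(4) by (simp add: commute_sign_def pv_linear_add[OF assms(1)] scaleR_add_right)
next
  assume "A \<inter> B = {}"
  then have "B - A = B" by blast
  then show ?thesis using commute_sign_sum_op[OF assms(1,5)] by simp
qed

lemma commute_sign_S_op:
  assumes "pv_linear R" "commute_sign 1 R (\<lambda>p. X (D p))" "commute_sign 1 R (\<lambda>p. D (X p))"
  shows "commute_sign 1 R (S_op X D)"
  using assms(2,3)
  by (simp add: commute_sign_def S_op_def pv_linear_scaleR[OF assms(1)] pv_linear_diff[OF assms(1)])

lemma commute_sign_S_op_left: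
  assumes X: "pv_linear X" and D: "pv_linear D"
    and XX: "\<And>p. X (X p) = (\<lambda>\<alpha>. - Q p \<alpha>)"
    and DQ: "\<And>p. D (Q p) = (\<lambda>\<alpha>. Q (D p) \<alpha> + 2 *\<^sub>R X p \<alpha>)"
  shows "commute_sign (-1) (S_op X D) X"
  unfolding commute_sign_def
proof (intro allI ext)
  fix p \<alpha>
  have "S_op X D (X p) \<alpha> = (1/2::real) *\<^sub>R (X (D (X p)) \<alpha> + Q (D p) \<alpha> + X p \<alpha>)"
    by (simp add: S_op_def XX DQ pv_linear_minus[OF D] algebra_simps flip: scaleR_add_left)
  also have "\<dots> = - X (S_op X D p) \<alpha>"
    by (simp add: S_op_def pv_linear_scaleR[OF X] pv_linear_diff[OF X] XX, simp add: algebra_simps)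
  finally show "S_op X D (X p) \<alpha> = (-1) *\<^sub>R X (S_op X D p) \<alpha>" by simp
qed

lemma commute_sign_S_op_right:
  assumes X: "pv_linear X" and D: "pv_linear D"
    and DD: "\<And>p. D (D p) = (\<lambda>\<alpha>. - P p \<alpha>)"
    and XP: "\<And>p. X (P p) = (\<lambda>\<alpha>. P (X p) \<alpha> + (-2) *\<^sub>R D p \<alpha>)"
  shows "commute_sign (-1) (S_op X D) D"
  unfolding commute_sign_def
proof (intro allI ext)
  fix p \<alpha>
  have "S_op X D (D p) \<alpha> = (1/2::real) *\<^sub>R (- P (X p) \<alpha> - D (X (D p)) \<alpha> + D p \<alpha>)"
    by (simp add: S_op_def DD XP pv_linear_minus[OF X] algebra_simps flip: scaleR_add_left)
  also have "\<dots> = - D (S_op X D p) \<alpha>"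
    by (simp add: S_op_def pv_linear_scaleR[OF D] pv_linear_diff[OF D] DD, simp add: algebra_simps)
  finally show "S_op X D (D p) \<alpha> = (-1) *\<^sub>R D (S_op X D p) \<alpha>" by simp
qed

section \<open>Coordinate operators, Dunkl operators and reflections\<close>

text \<open>\<open>T\<^sub>i x\<^sub>i\<^bsup>k+1\<^esup> = dunkl_weight \<mu>\<^sub>i k \<cdot> x\<^sub>i\<^bsup>k\<^esup>\<close>: the derivative contributes \<open>k + 1\<close>, the
  difference term \<open>\<mu>\<^sub>i (1 - (-1)\<^bsup>k+1\<^esup>)\<close>.\<close>

definition dunkl_weight :: "real \<Rightarrow> nat \<Rightarrow> real" where
  "dunkl_weight m k = real (Suc k) + (if even k then 2 * m else 0)"

lemma mulx_apply: "mulx i p \<alpha> = (if \<alpha> i = 0 then 0 else p (\<alpha>(i := \<alpha> i - 1)))"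
  by (simp add: mulx_def)

lemma cliff_apply: "cliff e i p \<alpha> = e i (p \<alpha>)"
  by (simp add: cliff_def)

lemma dunkl_apply: "dunkl \<mu> i p \<alpha> = dunkl_weight (\<mu> i) (\<alpha> i) *\<^sub>R p (\<alpha>(i := Suc (\<alpha> i)))"
proof -
  have weight: "real (Suc k) + m * (1 - (-1::real) ^ Suc k) = dunkl_weight m k" for m k
    by (cases "even k") (auto simp: dunkl_weight_def)
  have "dunkl \<mu> i p \<alpha> = (real (Suc (\<alpha> i)) + \<mu> i * (1 - (-1::real) ^ Suc (\<alpha> i))) *\<^sub>R p (\<alpha>(i := Suc (\<alpha> i)))"
    by (simp add: dunkl_def dx_def divx_def rfl_def algebra_simps)
  then show ?thesis by (simp only: weight)
qed

lemma rflA_apply: "finite A \<Longrightarrow> rflA A p \<alpha> = ((-1::real) ^ (\<Sum>i\<in>A. \<alpha> i)) *\<^sub>R p \<alpha>"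
proof -
  have "foldr rfl xs p = (\<lambda>\<alpha>. ((-1::real) ^ sum_list (map \<alpha> xs)) *\<^sub>R p \<alpha>)" for xs
    by (induction xs) (auto simp: rfl_def power_add)
  then show "finite A \<Longrightarrow> ?thesis" by (simp add: rflA_def sum_list_distinct_conv_sum_set)
qed

lemma pv_linear_mulx: "pv_linear (mulx i)"
  by (auto simp: pv_linear_def mulx_apply)

lemma pv_linear_dunkl: "pv_linear (dunkl \<mu> i)"
  by (auto simp: pv_linear_def dunkl_apply algebra_simps)

lemma pv_linear_rflA: "finite A \<Longrightarrow> pv_linear (rflA A)"
  by (simp add: pv_linear_def rflA_apply fun_eq_iff algebra_simps)

lemma coefficientwise_mulx: "coefficientwise (mulx i)"
  by (auto simp: coefficientwise_def mulx_apply linear_0)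

lemma coefficientwise_dunkl: "coefficientwise (dunkl \<mu> i)"
  by (auto simp: coefficientwise_def dunkl_apply linear_scale)

lemma coefficientwise_rflA: "finite A \<Longrightarrow> coefficientwise (rflA A)"
  by (auto simp: coefficientwise_def rflA_apply linear_scale)

lemma commute_mulx_mulx: "i \<noteq> j \<Longrightarrow> commute_sign 1 (mulx i) (mulx j)"
  by (auto simp: commute_sign_def mulx_apply fun_upd_twist)

lemma commute_mulx_dunkl: "i \<noteq> j \<Longrightarrow> commute_sign 1 (mulx i) (dunkl \<mu> j)"
  by (auto simp: commute_sign_def mulx_apply dunkl_apply fun_upd_twist)

lemma commute_dunkl_mulx: "i \<noteq> j \<Longrightarrow> commute_sign 1 (dunkl \<mu> i) (mulx j)"
  by (auto simp: commute_sign_def mulx_apply dunkl_apply fun_upd_twist)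

lemma commute_dunkl_dunkl: "i \<noteq> j \<Longrightarrow> commute_sign 1 (dunkl \<mu> i) (dunkl \<mu> j)"
  by (auto simp: commute_sign_def dunkl_apply fun_upd_twist)

lemma commute_rflA_rflA: "finite A \<Longrightarrow> finite B \<Longrightarrow> commute_sign 1 (rflA A) (rflA B)"
  by (simp add: commute_sign_def rflA_apply fun_eq_iff)

lemma dunkl_weight_Suc_Suc: "dunkl_weight m (Suc (Suc k)) = dunkl_weight m k + 2"
  by (simp add: dunkl_weight_def)

lemma dunkl_mulx_square:
  "dunkl \<mu> j (mulx j (mulx j p)) = (\<lambda>\<alpha>. mulx j (mulx j (dunkl \<mu> j p)) \<alpha> + 2 *\<^sub>R mulx j p \<alpha>)"
proof
  fix \<alpha> :: "nat \<Rightarrow> nat"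
  consider "\<alpha> j = 0" | "\<alpha> j = 1" | k where "\<alpha> j = Suc (Suc k)"
    by (metis One_nat_def not0_implies_Suc)
  then show "dunkl \<mu> j (mulx j (mulx j p)) \<alpha> = mulx j (mulx j (dunkl \<mu> j p)) \<alpha> + 2 *\<^sub>R mulx j p \<alpha>"
    by cases (simp_all add: mulx_apply dunkl_apply dunkl_weight_Suc_Suc scaleR_add_left,
      simp add: dunkl_weight_def)
qed

lemma mulx_dunkl_square:
  "mulx j (dunkl \<mu> j (dunkl \<mu> j p)) = (\<lambda>\<alpha>. dunkl \<mu> j (dunkl \<mu> j (mulx j p)) \<alpha> + (-2) *\<^sub>R dunkl \<mu> j p \<alpha>)"
proof
  fix \<alpha> :: "nat \<Rightarrow> nat"
  consider "\<alpha> j = 0" | m where "\<alpha> j = Suc m"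
    using not0_implies_Suc by blast
  then show "mulx j (dunkl \<mu> j (dunkl \<mu> j p)) \<alpha> = dunkl \<mu> j (dunkl \<mu> j (mulx j p)) \<alpha> + (-2) *\<^sub>R dunkl \<mu> j p \<alpha>"
    by cases (simp_all add: mulx_apply dunkl_apply dunkl_weight_Suc_Suc algebra_simps,
      simp add: dunkl_weight_def algebra_simps)
qed

lemma neg_one_power_sum_upd:
  assumes "finite B"
  shows "(-1::real) ^ (\<Sum>k\<in>B. if k = i then v else \<alpha> k) =
    (if i \<in> B then (-1) ^ v * (-1) ^ \<alpha> i else 1) * (-1) ^ (\<Sum>k\<in>B. \<alpha> k)"
proof (cases "i \<in> B")
  case True
  have "(\<Sum>k\<in>B. if k = i then v else \<alpha> k) = v + (\<Sum>k\<in>B - {i}. \<alpha> k)"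
    using assms True by (simp add: sum.remove)
  moreover have "(\<Sum>k\<in>B. \<alpha> k) = \<alpha> i + (\<Sum>k\<in>B - {i}. \<alpha> k)"
    using assms True by (simp add: sum.remove)
  ultimately show ?thesis
    using True by (simp add: power_add)
next
  case False
  then have "(\<Sum>k\<in>B. if k = i then v else \<alpha> k) = (\<Sum>k\<in>B. \<alpha> k)"
    by (intro sum.cong) auto
  then show ?thesis using False by simp
qed

lemma commute_sign_rflA_mulx:
  assumes "finite B"
  shows "commute_sign (if i \<in> B then -1 else 1) (rflA B) (mulx i)"
  unfolding commute_sign_def
proof (intro allI ext)
  fix p \<alpha>
  show "rflA B (mulx i p) \<alpha> = (if i \<in> B then -1 else 1) *\<^sub>R mulx i (rflA B p) \<alpha>"
    using assms by (cases "\<alpha> i") (auto simp: rflA_apply mulx_apply neg_one_power_sum_upd)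
qed

lemma commute_sign_rflA_dunkl:
  "finite B \<Longrightarrow> commute_sign (if i \<in> B then -1 else 1) (rflA B) (dunkl \<mu> i)"
  by (auto simp: commute_sign_def fun_eq_iff rflA_apply dunkl_apply neg_one_power_sum_upd)

section \<open>Clifford sums\<close>

lemma sum_sum_eq_diagonal:
  fixes f :: "'i \<Rightarrow> 'i \<Rightarrow> 'a::real_vector"
  assumes "finite A" "\<And>i j. i \<in> A \<Longrightarrow> j \<in> A \<Longrightarrow> i \<noteq> j \<Longrightarrow> f i j + f j i = 0"
  shows "(\<Sum>i\<in>A. \<Sum>j\<in>A. f i j) = (\<Sum>i\<in>A. f i i)"
proof -
  have symmetrized: "(\<Sum>j\<in>A. f i j + f j i) = 2 *\<^sub>R f i i" if "i \<in> A" for i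
  proof -
    have "(\<Sum>j\<in>A - {i}. f i j + f j i) = 0"
      using assms(2) that by (intro sum.neutral) auto
    then show ?thesis
      using assms(1) that by (simp add: sum.remove scaleR_2)
  qed
  have "2 *\<^sub>R (\<Sum>i\<in>A. \<Sum>j\<in>A. f i j) = (\<Sum>i\<in>A. \<Sum>j\<in>A. f i j) + (\<Sum>i\<in>A. \<Sum>j\<in>A. f j i)"
    by (simp only: scaleR_2 sum.swap[of "\<lambda>i j. f j i"])
  also have "\<dots> = (\<Sum>i\<in>A. \<Sum>j\<in>A. f i j + f j i)"
    by (simp add: sum.distrib)
  also have "\<dots> = 2 *\<^sub>R (\<Sum>i\<in>A. f i i)"
    by (simp add: symmetrized scaleR_sum_right)
  finally show ?thesis by simp
qed

lemma sum_op_square_commutator: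
  assumes "finite A" "j \<in> A" "pv_linear T"
    and "\<And>i. i \<in> A \<Longrightarrow> pv_linear (L i)"
    and "\<And>i. i \<in> A \<Longrightarrow> i \<noteq> j \<Longrightarrow> commute_sign 1 T (L i)"
    and "T (L j (L j p)) = (\<lambda>\<alpha>. L j (L j (T p)) \<alpha> + c *\<^sub>R N p \<alpha>)"
  shows "T (sum_op A (\<lambda>i q. L i (L i q)) p) = (\<lambda>\<alpha>. sum_op A (\<lambda>i q. L i (L i q)) (T p) \<alpha> + c *\<^sub>R N p \<alpha>)"
proof
  fix \<alpha>
  have off_diagonal: "T (L i (L i p)) = L i (L i (T p))" if "i \<in> A - {j}" for i
    using commute_sign_comp[OF assms(4) assms(5) assms(5), of i] that
    by (simp add: commute_sign_def)
  have "T (sum_op A (\<lambda>i q. L i (L i q)) p) \<alpha> = T (L j (L j p)) \<alpha> + (\<Sum>i\<in>A - {j}. T (L i (L i p)) \<alpha>)"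
    using assms(1,2) by (simp only: sum_op_def pv_linear_sum[OF assms(3)]) (simp add: sum.remove)
  also have "\<dots> = sum_op A (\<lambda>i q. L i (L i q)) (T p) \<alpha> + c *\<^sub>R N p \<alpha>"
    using assms(1,2) by (simp add: assms(6) off_diagonal sum_op_def sum.remove)
  finally show "T (sum_op A (\<lambda>i q. L i (L i q)) p) \<alpha> = sum_op A (\<lambda>i q. L i (L i q)) (T p) \<alpha> + c *\<^sub>R N p \<alpha>" .
qed

definition clifford_sum :: "(nat \<Rightarrow> 'v::real_vector \<Rightarrow> 'v) \<Rightarrow> nat set \<Rightarrow> (nat \<Rightarrow> 'v pv \<Rightarrow> 'v pv) \<Rightarrow> 'v pv \<Rightarrow> 'v pv" where
  "clifford_sum e A L = sum_op A (\<lambda>i p. cliff e i (L i p))"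

lemma vecxA_eq: "vecxA e A = clifford_sum e A mulx"
  by (simp add: fun_eq_iff vecxA_def clifford_sum_def sum_op_def)

lemma diracA_eq: "diracA e \<mu> A = clifford_sum e A (dunkl \<mu>)"
  by (simp add: fun_eq_iff diracA_def clifford_sum_def sum_op_def)

lemma SA_eq: "SA e \<mu> A = S_op (vecxA e A) (diracA e \<mu> A)"
  by (simp add: fun_eq_iff SA_def S_op_def)

context
  fixes n :: nat and e :: "nat \<Rightarrow> 'v::real_vector \<Rightarrow> 'v"
  assumes clifford: "clifford_module n e"
begin

lemma clifford_linear: "i \<in> {1..n} \<Longrightarrow> linear (e i)"
  using clifford by (simp add: clifford_module_def)

lemma clifford_anticommute: "i \<in> {1..n} \<Longrightarrow> j \<in> {1..n} \<Longrightarrow> i \<noteq> j \<Longrightarrow> e i (e j v) = - e j (e i v)"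
  using clifford by (simp add: clifford_module_def eq_neg_iff_add_eq_0)

lemma clifford_square:
  assumes "i \<in> {1..n}"
  shows "e i (e i v) = - v"
proof -
  have "2 *\<^sub>R e i (e i v) = 2 *\<^sub>R (- v)"
    using clifford assms by (simp add: clifford_module_def scaleR_2)
  then show ?thesis by (subst (asm) scaleR_cancel_left) simp
qed

lemma pv_linear_cliff: "i \<in> {1..n} \<Longrightarrow> pv_linear (cliff e i)"
  by (simp add: pv_linear_def cliff_def linear_add[OF clifford_linear] linear_scale[OF clifford_linear])

lemma coefficientwise_cliff:
  "coefficientwise F \<Longrightarrow> i \<in> {1..n} \<Longrightarrow> F (cliff e i q) = cliff e i (F q)"
  by (simp add: coefficientwise_def cliff_def clifford_linear)

lemma pv_linear_clifford_sum:
  "A \<subseteq> {1..n} \<Longrightarrow> (\<And>i. i \<in> A \<Longrightarrow> pv_linear (L i)) \<Longrightarrow> pv_linear (clifford_sum e A L)"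
  unfolding clifford_sum_def
  by (rule pv_linear_sum_op, rule pv_linear_comp[OF pv_linear_cliff]) auto

lemma commute_sign_cliff:
  assumes "coefficientwise R" "j \<in> {1..n}" "commute_sign s R L"
  shows "commute_sign s R (\<lambda>p. cliff e j (L p))"
  using assms(3)
  by (simp add: commute_sign_def coefficientwise_cliff[OF assms(1,2)] fun_eq_iff cliff_apply
      linear_scale[OF clifford_linear[OF assms(2)]])

lemma commute_sign_clifford_sum:
  assumes "pv_linear R" "coefficientwise R" "A \<subseteq> {1..n}"
    and "\<And>i. i \<in> A \<Longrightarrow> commute_sign s R (L i)"
  shows "commute_sign s R (clifford_sum e A L)"
  unfolding clifford_sum_def
  using assms by (intro commute_sign_sum_op commute_sign_cliff) auto

lemma anticommute_clifford_atoms: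
  assumes "i \<in> {1..n}" "j \<in> {1..n}" "i \<noteq> j"
    and "coefficientwise M" "coefficientwise L" "commute_sign 1 M L"
  shows "commute_sign (-1) (\<lambda>p. cliff e j (M p)) (\<lambda>p. cliff e i (L p))"
  using assms(6)
  by (simp add: commute_sign_def coefficientwise_cliff[OF assms(4,1)] coefficientwise_cliff[OF assms(5,2)]
      fun_eq_iff cliff_apply clifford_anticommute[OF assms(2,1) not_sym[OF assms(3)]])

lemma anticommute_clifford_sum:
  assumes "A \<subseteq> {1..n}" "j \<in> {1..n}" "j \<notin> A" "pv_linear M" "coefficientwise M"
    and "\<And>i. i \<in> A \<Longrightarrow> coefficientwise (L i)" "\<And>i. i \<in> A \<Longrightarrow> commute_sign 1 M (L i)"
  shows "commute_sign (-1) (\<lambda>p. cliff e j (M p)) (clifford_sum e A L)"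
  unfolding clifford_sum_def
proof (rule commute_sign_sum_op)
  show "pv_linear (\<lambda>p. cliff e j (M p))"
    by (rule pv_linear_comp[OF pv_linear_cliff[OF assms(2)] assms(4)])
  fix i assume "i \<in> A"
  with assms show "commute_sign (-1) (\<lambda>p. cliff e j (M p)) (\<lambda>p. cliff e i (L i p))"
    by (intro anticommute_clifford_atoms) auto
qed

lemma clifford_sum_apply: "clifford_sum e A L p \<alpha> = (\<Sum>i\<in>A. e i (L i p \<alpha>))"
  by (simp add: clifford_sum_def sum_op_def cliff_apply)

lemma clifford_sum_coefficientwise:
  assumes "A \<subseteq> {1..n}" "pv_linear F" "coefficientwise F"
  shows "F (clifford_sum e A L p) \<alpha> = (\<Sum>i\<in>A. e i (F (L i p) \<alpha>))"
proof -
  have "F (clifford_sum e A L p) = (\<lambda>\<alpha>. \<Sum>i\<in>A. F (cliff e i (L i p)) \<alpha>)"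
    unfolding clifford_sum_def sum_op_def by (rule pv_linear_sum[OF assms(2)])
  also have "\<dots> = (\<lambda>\<alpha>. \<Sum>i\<in>A. e i (F (L i p) \<alpha>))"
    using assms(1) by (intro ext sum.cong) (auto simp: coefficientwise_cliff[OF assms(3)] cliff_apply)
  finally show ?thesis by simp
qed

lemma clifford_sum_square:
  assumes A: "A \<subseteq> {1..n}"
    and L: "\<And>i. i \<in> A \<Longrightarrow> pv_linear (L i)" "\<And>i. i \<in> A \<Longrightarrow> coefficientwise (L i)"
    and commute: "\<And>i j. i \<in> A \<Longrightarrow> j \<in> A \<Longrightarrow> i \<noteq> j \<Longrightarrow> commute_sign 1 (L i) (L j)"
  shows "clifford_sum e A L (clifford_sum e A L p) = (\<lambda>\<alpha>. - sum_op A (\<lambda>i q. L i (L i q)) p \<alpha>)"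
proof
  fix \<alpha>
  have inA: "i \<in> {1..n}" if "i \<in> A" for i using A that by auto
  have "clifford_sum e A L (clifford_sum e A L p) \<alpha> = (\<Sum>i\<in>A. e i (L i (clifford_sum e A L p) \<alpha>))"
    by (rule clifford_sum_apply)
  also have "\<dots> = (\<Sum>i\<in>A. \<Sum>j\<in>A. e i (e j (L i (L j p) \<alpha>)))"
    by (intro sum.cong refl) (simp add: clifford_sum_coefficientwise[OF A L] linear_sum[OF clifford_linear[OF inA]])
  also have "\<dots> = (\<Sum>i\<in>A. e i (e i (L i (L i p) \<alpha>)))"
  proof (rule sum_sum_eq_diagonal)
    show "finite A" using A finite_subset by blast
    fix i j assume ij: "i \<in> A" "j \<in> A" "i \<noteq> j"
    then have "L j (L i p) = L i (L j p)"
      using commute[of j i] by (simp add: commute_sign_def)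
    then show "e i (e j (L i (L j p) \<alpha>)) + e j (e i (L j (L i p) \<alpha>)) = 0"
      using clifford_anticommute[OF inA[OF ij(1)] inA[OF ij(2)] ij(3)] by simp
  qed
  also have "\<dots> = - sum_op A (\<lambda>i q. L i (L i q)) p \<alpha>"
    by (simp add: sum_op_def clifford_square[OF inA] sum_negf)
  finally show "clifford_sum e A L (clifford_sum e A L p) \<alpha> = - sum_op A (\<lambda>i q. L i (L i q)) p \<alpha>" .
qed

lemma clifford_sum_square_commutator:
  assumes A: "A \<subseteq> {1..n}"
    and M: "\<And>i. i \<in> A \<Longrightarrow> pv_linear (M i)"
    and L: "\<And>i. i \<in> A \<Longrightarrow> pv_linear (L i)" "\<And>i. i \<in> A \<Longrightarrow> coefficientwise (L i)"
    and commute: "\<And>i j. i \<in> A \<Longrightarrow> j \<in> A \<Longrightarrow> i \<noteq> j \<Longrightarrow> commute_sign 1 (M j) (L i)"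
    and square: "\<And>j p. j \<in> A \<Longrightarrow> M j (L j (L j p)) = (\<lambda>\<alpha>. L j (L j (M j p)) \<alpha> + c *\<^sub>R N j p \<alpha>)"
  shows "clifford_sum e A M (sum_op A (\<lambda>i q. L i (L i q)) p) =
    (\<lambda>\<alpha>. sum_op A (\<lambda>i q. L i (L i q)) (clifford_sum e A M p) \<alpha> + c *\<^sub>R clifford_sum e A N p \<alpha>)"
proof
  fix \<alpha>
  let ?Q = "sum_op A (\<lambda>i q. L i (L i q))"
  have fin: "finite A" using A finite_subset by blast
  have inA: "i \<in> {1..n}" if "i \<in> A" for i using A that by auto
  have Q: "pv_linear ?Q" "coefficientwise ?Q"
    by (rule pv_linear_sum_op, rule pv_linear_comp[OF L(1) L(1)], assumption+)
      (rule coefficientwise_sum_op, rule coefficientwise_comp[OF L(2) L(2)], assumption+)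
  have MQ: "M j (?Q p) = (\<lambda>\<alpha>. ?Q (M j p) \<alpha> + c *\<^sub>R N j p \<alpha>)" if "j \<in> A" for j
    using that square[OF that] by (intro sum_op_square_commutator[where T = "M j"] fin M L(1) commute)
  have "clifford_sum e A M (?Q p) \<alpha> = (\<Sum>j\<in>A. e j (M j (?Q p) \<alpha>))"
    by (rule clifford_sum_apply)
  also have "\<dots> = (\<Sum>j\<in>A. e j (?Q (M j p) \<alpha> + c *\<^sub>R N j p \<alpha>))"
    by (simp add: MQ)
  also have "\<dots> = ?Q (clifford_sum e A M p) \<alpha> + c *\<^sub>R clifford_sum e A N p \<alpha>"
    by (simp add: clifford_sum_coefficientwise[OF A Q] clifford_sum_apply sum.distrib scaleR_sum_right
        linear_add[OF clifford_linear[OF inA]] linear_scale[OF clifford_linear[OF inA]])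
  finally show "clifford_sum e A M (?Q p) \<alpha> = ?Q (clifford_sum e A M p) \<alpha> + c *\<^sub>R clifford_sum e A N p \<alpha>" .
qed

section \<open>The operators \<open>S\<^sub>A\<close> and \<open>\<Gamma>\<^sub>A\<close>\<close>

lemma pv_linear_vecxA: "A \<subseteq> {1..n} \<Longrightarrow> pv_linear (vecxA e A)"
  unfolding vecxA_eq by (rule pv_linear_clifford_sum[OF _ pv_linear_mulx])

lemma pv_linear_diracA: "A \<subseteq> {1..n} \<Longrightarrow> pv_linear (diracA e \<mu> A)"
  unfolding diracA_eq by (rule pv_linear_clifford_sum[OF _ pv_linear_dunkl])

lemma pv_linear_SA: "A \<subseteq> {1..n} \<Longrightarrow> pv_linear (SA e \<mu> A)"
  unfolding SA_eq by (rule pv_linear_S_op[OF pv_linear_vecxA pv_linear_diracA])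

lemma pv_linear_GammaA: "A \<subseteq> {1..n} \<Longrightarrow> pv_linear (GammaA e \<mu> A)"
  unfolding GammaA_def[abs_def]
  by (rule pv_linear_comp[OF pv_linear_SA pv_linear_rflA[OF finite_subset[OF _ finite_atLeastAtMost]]])

lemma vecxA_square:
  "A \<subseteq> {1..n} \<Longrightarrow> vecxA e A (vecxA e A p) = (\<lambda>\<alpha>. - sum_op A (\<lambda>i q. mulx i (mulx i q)) p \<alpha>)"
  unfolding vecxA_eq
  by (rule clifford_sum_square[where L = mulx]) (simp_all add: pv_linear_mulx coefficientwise_mulx commute_mulx_mulx)

lemma diracA_square:
  "A \<subseteq> {1..n} \<Longrightarrow> diracA e \<mu> A (diracA e \<mu> A p) = (\<lambda>\<alpha>. - sum_op A (\<lambda>i q. dunkl \<mu> i (dunkl \<mu> i q)) p \<alpha>)"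
  unfolding diracA_eq
  by (rule clifford_sum_square[where L = "dunkl \<mu>"]) (simp_all add: pv_linear_dunkl coefficientwise_dunkl commute_dunkl_dunkl)

lemma diracA_sum_mulx_square:
  "A \<subseteq> {1..n} \<Longrightarrow> diracA e \<mu> A (sum_op A (\<lambda>i q. mulx i (mulx i q)) p) =
    (\<lambda>\<alpha>. sum_op A (\<lambda>i q. mulx i (mulx i q)) (diracA e \<mu> A p) \<alpha> + 2 *\<^sub>R vecxA e A p \<alpha>)"
  unfolding diracA_eq vecxA_eq
  by (rule clifford_sum_square_commutator[where M = "dunkl \<mu>" and L = mulx and N = mulx])
    (simp_all add: pv_linear_dunkl pv_linear_mulx coefficientwise_mulx commute_dunkl_mulx dunkl_mulx_square)

lemma vecxA_sum_dunkl_square: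
  "A \<subseteq> {1..n} \<Longrightarrow> vecxA e A (sum_op A (\<lambda>i q. dunkl \<mu> i (dunkl \<mu> i q)) p) =
    (\<lambda>\<alpha>. sum_op A (\<lambda>i q. dunkl \<mu> i (dunkl \<mu> i q)) (vecxA e A p) \<alpha> + (-2) *\<^sub>R diracA e \<mu> A p \<alpha>)"
  unfolding diracA_eq vecxA_eq
  by (rule clifford_sum_square_commutator[where M = mulx and L = "dunkl \<mu>" and N = "dunkl \<mu>"])
    (simp_all add: pv_linear_dunkl pv_linear_mulx coefficientwise_dunkl commute_mulx_dunkl mulx_dunkl_square)

lemma SA_anticommute_vecxA:
  assumes "A \<subseteq> {1..n}"
  shows "commute_sign (-1) (SA e \<mu> A) (vecxA e A)"
  unfolding SA_eq
  by (rule commute_sign_S_op_left[where Q = "sum_op A (\<lambda>i q. mulx i (mulx i q))"])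
    (rule pv_linear_vecxA[OF assms] pv_linear_diracA[OF assms] vecxA_square[OF assms]
      diracA_sum_mulx_square[OF assms])+

lemma SA_anticommute_diracA:
  assumes "A \<subseteq> {1..n}"
  shows "commute_sign (-1) (SA e \<mu> A) (diracA e \<mu> A)"
  unfolding SA_eq
  by (rule commute_sign_S_op_right[where P = "sum_op A (\<lambda>i q. dunkl \<mu> i (dunkl \<mu> i q))"])
    (rule pv_linear_vecxA[OF assms] pv_linear_diracA[OF assms] diracA_square[OF assms]
      vecxA_sum_dunkl_square[OF assms])+

text \<open>Under the hypothesis on \<open>A\<close> and \<open>B\<close>, \<open>r\<^sub>B\<close> gives every \<open>e\<^sub>ix\<^sub>i\<close>, \<open>e\<^sub>iT\<^sub>i\<close> with \<open>i \<in> A\<close>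
  the same sign.\<close>

lemma rflA_commute_sign:
  assumes "A \<subseteq> {1..n}" "finite B" "A \<subseteq> B \<or> A \<inter> B = {}"
  defines "s \<equiv> if A \<subseteq> B then -1 else 1"
  shows "commute_sign s (rflA B) (vecxA e A)" and "commute_sign s (rflA B) (diracA e \<mu> A)"
proof -
  have sign: "(if i \<in> B then -1 else 1) = s" if "i \<in> A" for i
    using assms(3) that by (auto simp: s_def)
  note rflA = pv_linear_rflA[OF assms(2)] coefficientwise_rflA[OF assms(2)] assms(1)
  show "commute_sign s (rflA B) (vecxA e A)"
    unfolding vecxA_eq
    by (rule commute_sign_clifford_sum[OF rflA]) (metis sign commute_sign_rflA_mulx[OF assms(2)])
  show "commute_sign s (rflA B) (diracA e \<mu> A)"
    unfolding diracA_eq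
    by (rule commute_sign_clifford_sum[OF rflA]) (metis sign commute_sign_rflA_dunkl[OF assms(2)])
qed

lemma rflA_commute_SA:
  assumes "A \<subseteq> {1..n}" "finite B" "A \<subseteq> B \<or> A \<inter> B = {}"
  shows "commute_sign 1 (rflA B) (SA e \<mu> A)"
proof -
  let ?s = "if A \<subseteq> B then -1 else 1 :: real"
  have sign: "?s * ?s = 1" by simp
  have "commute_sign (?s * ?s) (rflA B) (\<lambda>p. vecxA e A (diracA e \<mu> A p))"
    by (rule commute_sign_comp[OF pv_linear_vecxA[OF assms(1)] rflA_commute_sign[OF assms]])
  moreover have "commute_sign (?s * ?s) (rflA B) (\<lambda>p. diracA e \<mu> A (vecxA e A p))"
    by (rule commute_sign_comp[OF pv_linear_diracA[OF assms(1)] rflA_commute_sign(2,1)[OF assms]])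
  ultimately show ?thesis
    unfolding SA_eq sign by (intro commute_sign_S_op pv_linear_rflA assms(2))
qed

lemma GammaA_commute_vecxA_diracA:
  assumes "A \<subseteq> {1..n}"
  shows "commute_sign 1 (GammaA e \<mu> A) (vecxA e A)" and "commute_sign 1 (GammaA e \<mu> A) (diracA e \<mu> A)"
proof -
  have fin: "finite A" using assms finite_subset by blast
  show "commute_sign 1 (GammaA e \<mu> A) (vecxA e A)"
    using commute_sign_comp_left[OF pv_linear_SA[OF assms] SA_anticommute_vecxA[OF assms]
        rflA_commute_sign(1)[OF assms fin]]
    by (simp add: GammaA_def[abs_def])
  show "commute_sign 1 (GammaA e \<mu> A) (diracA e \<mu> A)"
    using commute_sign_comp_left[OF pv_linear_SA[OF assms] SA_anticommute_diracA[OF assms]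
        rflA_commute_sign(2)[OF assms fin]]
    by (simp add: GammaA_def[abs_def])
qed

lemma GammaA_commute_cliff:
  assumes A: "A \<subseteq> {1..n}" and j: "j \<in> {1..n}" "j \<notin> A"
    and T: "pv_linear T" "coefficientwise T" "commute_sign 1 (rflA A) T"
      "\<And>i. i \<in> A \<Longrightarrow> commute_sign 1 T (mulx i)" "\<And>i. i \<in> A \<Longrightarrow> commute_sign 1 T (dunkl \<mu> i)"
  shows "commute_sign 1 (GammaA e \<mu> A) (\<lambda>p. cliff e j (T p))"
proof -
  have fin: "finite A" using A finite_subset by blast
  have X: "commute_sign (-1) (\<lambda>p. cliff e j (T p)) (vecxA e A)"
    unfolding vecxA_eq by (rule anticommute_clifford_sum[OF A j T(1,2) coefficientwise_mulx T(4)])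
  have D: "commute_sign (-1) (\<lambda>p. cliff e j (T p)) (diracA e \<mu> A)"
    unfolding diracA_eq by (rule anticommute_clifford_sum[OF A j T(1,2) coefficientwise_dunkl T(5)])
  have "commute_sign 1 (\<lambda>p. cliff e j (T p)) (SA e \<mu> A)"
    using commute_sign_comp[OF pv_linear_vecxA[OF A] X D] commute_sign_comp[OF pv_linear_diracA[OF A] D X]
    unfolding SA_eq by (intro commute_sign_S_op pv_linear_comp[OF pv_linear_cliff[OF j(1)] T(1)]) simp_all
  then have "commute_sign 1 (SA e \<mu> A) (\<lambda>p. cliff e j (T p))"
    by (rule commute_sign_one_sym)
  moreover have "commute_sign 1 (rflA A) (\<lambda>p. cliff e j (T p))"
    by (rule commute_sign_cliff[OF coefficientwise_rflA[OF fin] j(1) T(3)])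
  ultimately have "commute_sign (1 * 1) (\<lambda>p. SA e \<mu> A (rflA A p)) (\<lambda>p. cliff e j (T p))"
    by (rule commute_sign_comp_left[OF pv_linear_SA[OF A]])
  then show ?thesis by (simp add: GammaA_def[abs_def])
qed

lemma GammaA_commute_SA:
  assumes A: "A \<subseteq> {1..n}" and B: "B \<subseteq> {1..n}" and AB: "A \<subseteq> B \<or> A \<inter> B = {}"
  shows "commute_sign 1 (GammaA e \<mu> A) (SA e \<mu> B)"
proof -
  have finA: "finite A" and finB: "finite B" using A B finite_subset by blast+
  note \<Gamma> = pv_linear_GammaA[OF A]
  have outside: "j \<in> {1..n}" "j \<notin> A" "\<And>i. i \<in> A \<Longrightarrow> j \<noteq> i" if "j \<in> B - A" for j
    using that B by auto
  have X: "commute_sign 1 (GammaA e \<mu> A) (vecxA e B)"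
    using GammaA_commute_vecxA_diracA(1)[OF A] unfolding vecxA_eq clifford_sum_def
  proof (rule commute_sign_sum_op_extend[OF \<Gamma> finB AB])
    fix j assume "j \<in> B - A"
    with outside[OF this] show "commute_sign 1 (GammaA e \<mu> A) (\<lambda>p. cliff e j (mulx j p))"
      by (intro GammaA_commute_cliff[OF A] pv_linear_mulx coefficientwise_mulx commute_mulx_mulx
          commute_mulx_dunkl) (use commute_sign_rflA_mulx[OF finA, of j] in auto)
  qed
  have D: "commute_sign 1 (GammaA e \<mu> A) (diracA e \<mu> B)"
    using GammaA_commute_vecxA_diracA(2)[OF A] unfolding diracA_eq clifford_sum_def
  proof (rule commute_sign_sum_op_extend[OF \<Gamma> finB AB])
    fix j assume "j \<in> B - A"
    with outside[OF this] show "commute_sign 1 (GammaA e \<mu> A) (\<lambda>p. cliff e j (dunkl \<mu> j p))"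
      by (intro GammaA_commute_cliff[OF A] pv_linear_dunkl coefficientwise_dunkl commute_dunkl_mulx
          commute_dunkl_dunkl) (use commute_sign_rflA_dunkl[OF finA, of j] in auto)
  qed
  show ?thesis
    using commute_sign_comp[OF pv_linear_vecxA[OF B] X D] commute_sign_comp[OF pv_linear_diracA[OF B] D X]
    unfolding SA_eq by (intro commute_sign_S_op \<Gamma>) simp_all
qed

lemma GammaA_commute_GammaA:
  assumes A: "A \<subseteq> {1..n}" and B: "B \<subseteq> {1..n}" and AB: "A \<subseteq> B \<or> A \<inter> B = {}"
  shows "GammaA e \<mu> A (GammaA e \<mu> B p) = GammaA e \<mu> B (GammaA e \<mu> A p)"
proof -
  have finA: "finite A" and finB: "finite B" using A B finite_subset by blast+
  have "commute_sign (1 * 1) (rflA B) (\<lambda>p. SA e \<mu> A (rflA A p))"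
    by (rule commute_sign_comp[OF pv_linear_SA[OF A] rflA_commute_SA[OF A finB AB] commute_rflA_rflA[OF finB finA]])
  then have "commute_sign 1 (rflA B) (GammaA e \<mu> A)"
    by (simp add: GammaA_def[abs_def])
  then have "commute_sign 1 (GammaA e \<mu> A) (rflA B)"
    by (rule commute_sign_one_sym)
  then have "commute_sign (1 * 1) (GammaA e \<mu> A) (\<lambda>p. SA e \<mu> B (rflA B p))"
    by (rule commute_sign_comp[OF pv_linear_SA[OF B] GammaA_commute_SA[OF A B AB]])
  then show ?thesis by (simp add: commute_sign_def GammaA_def)
qed

end

theorem lemma3:
  fixes n :: nat and \<mu> :: "nat \<Rightarrow> real" and e :: "nat \<Rightarrow> 'v::real_vector \<Rightarrow> 'v"
    and A B :: "nat set" and p :: "'v pv"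
  assumes "n \<ge> 1"
    and "\<forall>i\<in>{1..n}. \<mu> i > 0"
    and "clifford_module n e"
    and "A \<subseteq> {1..n}" and "B \<subseteq> {1..n}"
    and "A \<subseteq> B \<or> B \<subseteq> A \<or> A \<inter> B = {}"
    and "is_poly n p"
  shows "GammaA e \<mu> A (GammaA e \<mu> B p) = GammaA e \<mu> B (GammaA e \<mu> A p)"
proof (cases "A \<subseteq> B \<or> A \<inter> B = {}")
  case True
  show ?thesis by (rule GammaA_commute_GammaA[OF assms(3,4,5) True])
next
  case False
  then have "B \<subseteq> A \<or> B \<inter> A = {}" using assms(6) by blast
  from GammaA_commute_GammaA[OF assms(3,5,4) this] show ?thesis by (rule sym)
qed

end
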